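(* For each $i \in [n]$, let $r_i$ be the number of elements $x_j$, $j \ne i$, that are larger than $x_i$ in the comparison graph. Let $S$ be any set of $\min\{n, 2k+1\}$ elements having the smallest values of $r_i$ (ties broken arbitrarily). Then $S$ contains the uncorrupted maximum.
   Context: Model: there are $n$ elements $x_1,\dots,x_n$, exactly $k$ of which are corrupted (unknown to the algorithm). For every pair of distinct elements the comparison graph (a tournament) specifies which one is larger. The comparison graph restricted to the $n-k$ uncorrupted elements is acyclic; comparisons involving corrupted elements may be oriented arbitrarily. The uncorrupted maximum is the uncorrupted element larger than every other uncorrupted element. *)

theory Defs
  imports Main
begin

text \<open>Elements are indexed by 0..<n. gt i j means: the comparison graph says x_i is larger than x_j.\<close>

definition is_tournament :: "nat \<Rightarrow> (nat \<Rightarrow> nat \<Rightarrow> bool) \<Rightarrow> bool" where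
  "is_tournament n gt \<longleftrightarrow>
     (\<forall>i<n. \<forall>j<n. i \<noteq> j \<longrightarrow> (gt i j \<longleftrightarrow> \<not> gt j i))"

definition restrict_graph :: "(nat \<Rightarrow> nat \<Rightarrow> bool) \<Rightarrow> nat set \<Rightarrow> (nat \<times> nat) set" where
  "restrict_graph gt U = {(i, j). i \<in> U \<and> j \<in> U \<and> i \<noteq> j \<and> gt i j}"

definition rank_count :: "nat \<Rightarrow> (nat \<Rightarrow> nat \<Rightarrow> bool) \<Rightarrow> nat \<Rightarrow> nat" where
  "rank_count n gt i = card {j. j < n \<and> j \<noteq> i \<and> gt j i}"

definition uncorrupted_max :: "nat \<Rightarrow> (nat \<Rightarrow> nat \<Rightarrow> bool) \<Rightarrow> nat set \<Rightarrow> nat \<Rightarrow> bool" where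
  "uncorrupted_max n gt C m \<longleftrightarrow>
     m < n \<and> m \<notin> C \<and> (\<forall>j<n. j \<notin> C \<longrightarrow> j \<noteq> m \<longrightarrow> gt m j)"

end

theory Submission
  imports Defs
begin

text \<open>Only corrupted elements can beat the uncorrupted maximum m, so r_m \<le> k.
  If m were left out of S, then S would have 2k+1 elements, at least k+1 of them uncorrupted.
  The acyclic tournament on these has a sink u, beaten by the other uncorrupted members of S
  and by m, so r_u \<ge> k+1 > r_m, contradicting the choice of S.\<close>

lemma card_le_rank_count:
  assumes "A \<subseteq> {..<n}" "u \<notin> A" "\<forall>j\<in>A. gt j u"
  shows "card A \<le> rank_count n gt u"
  unfolding rank_count_def
  by (rule card_mono) (use assms in auto)

lemma rank_count_uncorrupted_max_le:
  assumes "is_tournament n gt" "C \<subseteq> {..<n}" "uncorrupted_max n gt C m"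
  shows "rank_count n gt m \<le> card C"
proof -
  have "{j. j < n \<and> j \<noteq> m \<and> gt j m} \<subseteq> C"
    using assms unfolding is_tournament_def uncorrupted_max_def by blast
  then show ?thesis
    unfolding rank_count_def using assms(2) by (intro card_mono) (auto intro: finite_subset)
qed

lemma acyclic_tournament_has_sink:
  assumes tour: "is_tournament n gt" and acyc: "acyclic (restrict_graph gt V)"
    and "V \<subseteq> {..<n}" "U \<subseteq> V" "U \<noteq> {}"
  shows "\<exists>u\<in>U. \<forall>j\<in>U - {u}. gt j u"
proof -
  let ?R = "restrict_graph gt V"
  have "finite ?R"
    by (rule finite_subset[of _ "{..<n} \<times> {..<n}"])
       (use \<open>V \<subseteq> {..<n}\<close> in \<open>auto simp: restrict_graph_def\<close>)
  with acyc have "wf (?R\<inverse>)"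
    by (intro finite_acyclic_wf) (simp_all add: acyclic_converse)
  then obtain u where "u \<in> U" and sink: "\<forall>y. (y, u) \<in> ?R\<inverse> \<longrightarrow> y \<notin> U"
    using \<open>U \<noteq> {}\<close> wf_eq_minimal[of "?R\<inverse>"] by blast
  have "gt j u" if "j \<in> U - {u}" for j
  proof -
    have "\<not> gt u j"
      using sink that \<open>u \<in> U\<close> \<open>U \<subseteq> V\<close> by (auto simp: restrict_graph_def)
    then show ?thesis
      using tour that \<open>u \<in> U\<close> \<open>U \<subseteq> V\<close> \<open>V \<subseteq> {..<n}\<close>
      unfolding is_tournament_def by blast
  qed
  with \<open>u \<in> U\<close> show ?thesis by blast
qed

theorem mainTheorem2:
  fixes n k :: nat and gt :: "nat \<Rightarrow> nat \<Rightarrow> bool" and C S :: "nat set" and m :: nat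
  assumes tour: "is_tournament n gt"
    and C_sub: "C \<subseteq> {..<n}" and C_card: "card C = k"
    and acyc: "acyclic (restrict_graph gt ({..<n} - C))"
    and S_sub: "S \<subseteq> {..<n}" and S_card: "card S = min n (2 * k + 1)"
    and S_small: "\<forall>i\<in>S. \<forall>j\<in>{..<n} - S. rank_count n gt i \<le> rank_count n gt j"
    and m_max: "uncorrupted_max n gt C m"
  shows "m \<in> S"
proof (rule ccontr)
  assume "m \<notin> S"
  have m: "m < n" "m \<notin> C" "\<forall>j<n. j \<notin> C \<longrightarrow> j \<noteq> m \<longrightarrow> gt m j"
    using m_max unfolding uncorrupted_max_def by auto
  have "card S < n"
    using \<open>m \<notin> S\<close> m(1) S_sub psubset_card_mono[of "{..<n}" S] by auto
  with S_card have "card (S - C) \<ge> k + 1"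
    using diff_card_le_card_Diff[of C S] C_sub C_card by (auto intro: finite_subset)
  then obtain u where u: "u \<in> S - C" and sink: "\<forall>j\<in>(S - C) - {u}. gt j u"
    using acyclic_tournament_has_sink[OF tour acyc, of "S - C"] S_sub by fastforce
  have "finite (S - C)"
    using S_sub by (auto intro: finite_subset)
  then have "card (S - C) = card (insert m ((S - C) - {u}))"
    using card.remove[of "S - C" u] u \<open>m \<notin> S\<close> by simp
  also have "\<dots> \<le> rank_count n gt u"
  proof (rule card_le_rank_count)
    show "insert m ((S - C) - {u}) \<subseteq> {..<n}" using m(1) S_sub by blast
    show "u \<notin> insert m ((S - C) - {u})" using u \<open>m \<notin> S\<close> by blast
    have "gt m u" using m(3) u S_sub \<open>m \<notin> S\<close> by auto
    then show "\<forall>j\<in>insert m ((S - C) - {u}). gt j u" using sink by blast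
  qed
  finally have "k + 1 \<le> rank_count n gt u" using \<open>card (S - C) \<ge> k + 1\<close> by linarith
  moreover have "rank_count n gt u \<le> rank_count n gt m"
    using S_small u \<open>m \<notin> S\<close> m(1) by auto
  ultimately show False
    using rank_count_uncorrupted_max_le[OF tour C_sub m_max] C_card by linarith
qed

end
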